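(* Let $R>0$ be such that $B_R\subset\Omega$ (a ball of radius $R$), let $c\in(0,1)$, $\eta\in C_0^\infty(B_{cR})$ (with $B_{cR}$ the concentric ball of radius $cR$), and $s\in(0,1)$. Then for functions $f$ on $B_R$ (with $\eta f$ extended by zero to $\Omega$), \[ \|\eta f\|_{H^{-s}(\Omega)}\le C_{\rm loc}\|\eta\|_{L^\infty(B_{cR})}\|f\|_{L^2(B_{cR})}, \] \[ \|\eta f\|_{H^{1-s}(\Omega)}\le C_{\mathrm{loc},2}\Big[\big(R^s\|\nabla\eta\|_{L^\infty(B_{cR})}+(R^{s-1}+1)\|\eta\|_{L^\infty(B_{cR})}\big)\|f\|_{L^2(B_R)}+\|\eta\|_{L^\infty(B_{cR})}|f|_{H^{1-s}(B_R)}\Big], \] where $C_{\rm loc}$ depends only on $\Omega$ and $s$, and $C_{\mathrm{loc},2}$ depends additionally on $c$.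
   Context: $\Omega\subset\mathbb{R}^3$ is a bounded Lipschitz domain (polyhedron). For $t\in(0,1)$ and open $\omega\subset\mathbb{R}^3$, $|v|^2_{H^t(\omega)}=\int_\omega\int_\omega\frac{|v(x)-v(z)|^2}{|x-z|^{3+2t}}\,dz\,dx$ and $\|v\|^2_{H^t(\omega)}=\|v\|^2_{L^2(\omega)}+|v|^2_{H^t(\omega)}$. $H^{-s}(\Omega)$ is the dual space of $\widetilde H^s(\Omega)=\{u\in H^s(\mathbb{R}^3):u\equiv0\text{ on }\mathbb{R}^3\setminus\overline\Omega\}$, with the duality pairing extending the $L^2(\Omega)$ inner product. *)

theory Defs
  imports "HOL-Analysis.Analysis"
begin

type_synonym R3 = "real^3"

definition ennsqrt :: "ennreal \<Rightarrow> ennreal" where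
  "ennsqrt x = (if x = \<infinity> then \<infinity> else ennreal (sqrt (enn2real x)))"

definition L2_sq :: "(R3 \<Rightarrow> real) \<Rightarrow> R3 set \<Rightarrow> ennreal" where
  "L2_sq v \<omega> = (\<integral>\<^sup>+ x\<in>\<omega>. ennreal ((v x)\<^sup>2) \<partial>lborel)"

definition L2_norm :: "(R3 \<Rightarrow> real) \<Rightarrow> R3 set \<Rightarrow> ennreal" where
  "L2_norm v \<omega> = ennsqrt (L2_sq v \<omega>)"

definition Hs_semi_sq :: "(R3 \<Rightarrow> real) \<Rightarrow> R3 set \<Rightarrow> real \<Rightarrow> ennreal" where
  "Hs_semi_sq v \<omega> t = (\<integral>\<^sup>+ x\<in>\<omega>. (\<integral>\<^sup>+ z\<in>\<omega>.
      ennreal ((v x - v z)\<^sup>2 / (norm (x - z)) powr (3 + 2 * t)) \<partial>lborel) \<partial>lborel)"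

definition Hs_semi :: "(R3 \<Rightarrow> real) \<Rightarrow> R3 set \<Rightarrow> real \<Rightarrow> ennreal" where
  "Hs_semi v \<omega> t = ennsqrt (Hs_semi_sq v \<omega> t)"

definition Hs_norm :: "(R3 \<Rightarrow> real) \<Rightarrow> R3 set \<Rightarrow> real \<Rightarrow> ennreal" where
  "Hs_norm v \<omega> t = ennsqrt (L2_sq v \<omega> + Hs_semi_sq v \<omega> t)"

definition Htilde :: "real \<Rightarrow> R3 set \<Rightarrow> (R3 \<Rightarrow> real) set" where
  "Htilde s \<Omega> = {u. u \<in> borel_measurable lborel \<and> Hs_norm u UNIV s < \<infinity> \<and>
                      (\<forall>x. x \<notin> closure \<Omega> \<longrightarrow> u x = 0)}"

definition Hneg_norm :: "(R3 \<Rightarrow> real) \<Rightarrow> R3 set \<Rightarrow> real \<Rightarrow> ennreal" where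
  "Hneg_norm g \<Omega> s = (SUP u\<in>{u\<in>Htilde s \<Omega>. Hs_norm u UNIV s \<noteq> 0}.
       ennreal (abs (LINT x:\<Omega>|lborel. g x * u x)) / Hs_norm u UNIV s)"

definition partial :: "3 \<Rightarrow> (R3 \<Rightarrow> real) \<Rightarrow> R3 \<Rightarrow> real" where
  "partial i f x = deriv (\<lambda>t. f (x + t *\<^sub>R axis i 1)) 0"

definition smooth :: "(R3 \<Rightarrow> real) \<Rightarrow> bool" where
  "smooth f \<longleftrightarrow> (\<forall>is :: 3 list. (foldr partial is f) differentiable_on UNIV)"

definition C0_inf :: "R3 set \<Rightarrow> (R3 \<Rightarrow> real) set" where
  "C0_inf U = {f. smooth f \<and> compact (closure {x. f x \<noteq> 0}) \<and> closure {x. f x \<noteq> 0} \<subseteq> U}"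

definition lipschitz_domain :: "R3 set \<Rightarrow> bool" where
  "lipschitz_domain \<Omega> \<longleftrightarrow> open \<Omega> \<and> connected \<Omega> \<and> \<Omega> \<noteq> {} \<and> bounded \<Omega> \<and>
    (\<forall>p\<in>frontier \<Omega>. \<exists>r>0. \<exists>(Q::R3 \<Rightarrow> R3) (g::real \<Rightarrow> real \<Rightarrow> real) L.
        orthogonal_transformation Q \<and>
        (\<forall>a b a' b'. \<bar>g a b - g a' b'\<bar> \<le> L * sqrt ((a - a')\<^sup>2 + (b - b')\<^sup>2)) \<and>
        \<Omega> \<inter> ball p r = {x \<in> ball p r. Q (x - p) $ 3 < g (Q (x - p) $ 1) (Q (x - p) $ 2)})"

definition sup_norm :: "(R3 \<Rightarrow> real) \<Rightarrow> R3 set \<Rightarrow> ennreal" where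
  "sup_norm f U = (SUP x\<in>U. ennreal \<bar>f x\<bar>)"

definition grad_sup_norm :: "(R3 \<Rightarrow> real) \<Rightarrow> R3 set \<Rightarrow> ennreal" where
  "grad_sup_norm f U = (SUP x\<in>U. ennreal (norm (\<chi> i. partial i f x)))"

end

theory Submission
  imports Defs
begin

(* The dual bound is Cauchy-Schwarz: pairing \<eta> f with u gives at most
   sup|\<eta>| * |f|_{L2(B_cR)} * |u|_{L2}, and |u|_{L2} <= |u|_{H^s}; with the norms used here C_loc = 1.

   For the H^{1-s} bound put b = 3 + 2(1 - s), so 3 < b < 5, and split the double integral of
   |\<eta> f (x) - \<eta> f (z)|^2 / |x - z|^b according to whether x and z lie in B = B_R.
   For x, z in B write \<eta> f (x) - \<eta> f (z) = \<eta>(z) (f x - f z) + f x (\<eta> x - \<eta> z): the first term gives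
   sup|\<eta>|^2 |f|^2_{H^{1-s}(B)}, the second f(x)^2 times \<integral> |\<eta> x - \<eta> z|^2 |x - z|^(-b) dz, which the
   Lipschitz bound (for |x - z| < R) and the sup bound (for |x - z| >= R) make
   O(R^{2s} |\<nabla>\<eta>|^2 + R^{2s-2} sup|\<eta>|^2).  If only one point lies in B, the other lies in
   supp \<eta> \<subseteq> B_cR, so the two points are at distance >= (1 - c) R (resp. (1 - c) |x - x0|) and only
   the integrable tail of |y|^(-b) enters.  The truncated integrals of |y|^(-b) are bounded by
   covering the region by dyadic balls. *)

section \<open>Truncated Riesz kernels\<close>

(* The constants are the sums of the geometric series produced by covering the region of
   integration by the dyadic balls of radius \<rho> 2^(k+1) (far) and \<rho> 2^(-k) (near). *)
definition far_kernel_const :: "nat \<Rightarrow> real \<Rightarrow> real" where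
  "far_kernel_const n b = 2 ^ n * unit_ball_vol n / (1 - 2 powr (n - b))"

definition near_kernel_const :: "nat \<Rightarrow> real \<Rightarrow> real" where
  "near_kernel_const n b = 2 powr b * unit_ball_vol n / (1 - 2 powr (b - n))"

definition far_kernel :: "real \<Rightarrow> real \<Rightarrow> 'a::real_normed_vector \<Rightarrow> real" where
  "far_kernel b \<rho> y = (if \<rho> \<le> norm y then norm y powr (-b) else 0)"

definition near_kernel :: "real \<Rightarrow> real \<Rightarrow> 'a::real_normed_vector \<Rightarrow> real" where
  "near_kernel b \<rho> y = (if 0 < norm y \<and> norm y < \<rho> then norm y powr (-b) else 0)"

lemma far_kernel_nonneg [simp]: "0 \<le> far_kernel b \<rho> y"
  by (simp add: far_kernel_def)

lemma near_kernel_nonneg [simp]: "0 \<le> near_kernel b \<rho> y"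
  by (simp add: near_kernel_def)

lemma borel_measurable_far_kernel [measurable]:
  "far_kernel b \<rho> \<in> borel_measurable (borel :: 'a::{real_normed_vector, second_countable_topology} measure)"
  unfolding far_kernel_def[abs_def] by measurable

lemma borel_measurable_near_kernel [measurable]:
  "near_kernel b \<rho> \<in> borel_measurable (borel :: 'a::{real_normed_vector, second_countable_topology} measure)"
  unfolding near_kernel_def[abs_def] by measurable

lemma far_kernel_const_nonneg: "n < (b::real) \<Longrightarrow> 0 \<le> far_kernel_const n b"
  unfolding far_kernel_const_def by (intro divide_nonneg_pos mult_nonneg_nonneg) (auto intro: powr_less_one)

lemma near_kernel_const_nonneg: "(b::real) < n \<Longrightarrow> 0 \<le> near_kernel_const n b"
  unfolding near_kernel_const_def by (intro divide_nonneg_pos mult_nonneg_nonneg) (auto intro: powr_less_one)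

lemma ex_dyadic_bracket:
  fixes y :: real
  assumes "1 \<le> y"
  obtains k :: nat where "2 ^ k \<le> y" "y < 2 ^ (k + 1)"
proof -
  have "1 \<le> nat \<lfloor>y\<rfloor>" using assms by linarith
  then obtain k where k: "2 ^ k \<le> nat \<lfloor>y\<rfloor>" "nat \<lfloor>y\<rfloor> < (2::nat) ^ (k + 1)"
    using ex_power_ivl1[of 2 "nat \<lfloor>y\<rfloor>"] by auto
  have y: "real (nat \<lfloor>y\<rfloor>) \<le> y" "y < real (nat \<lfloor>y\<rfloor>) + 1"
    using assms by linarith+
  have "(2::real) ^ k \<le> y"
    using k(1) y(1) by (metis of_nat_le_iff of_nat_numeral of_nat_power order.trans)
  moreover have "y < 2 ^ (k + 1)"
    using k(2) y(2) by (metis Suc_leI of_nat_1 of_nat_add of_nat_le_iff of_nat_numeral of_nat_power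
        Suc_eq_plus1 order_less_le_trans)
  ultimately show ?thesis by (rule that)
qed

lemma suminf_ennreal_geometric:
  fixes C q :: real
  assumes "0 \<le> C" "0 \<le> q" "q < 1"
  shows "(\<Sum>k. ennreal (C * q ^ k)) = ennreal (C / (1 - q))"
proof (rule suminf_ennreal_eq)
  show "(\<lambda>k. C * q ^ k) sums (C / (1 - q))"
    using sums_mult[OF geometric_sums, of q C] assms by (simp add: divide_inverse)
qed (use assms in simp)

lemma nn_integral_le_suminf_cball:
  fixes x :: "'a::euclidean_space" and g :: "'a \<Rightarrow> ennreal"
  assumes g: "\<And>z. \<exists>k. g z \<le> ennreal (a k) * indicator (cball x (r k)) z"
    and a: "\<And>k. 0 \<le> a k" and r: "\<And>k. 0 \<le> r k"
  shows "(\<integral>\<^sup>+z. g z \<partial>lborel) \<le> (\<Sum>k. ennreal (a k * (unit_ball_vol DIM('a) * r k ^ DIM('a))))"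
proof -
  have "g z \<le> (\<Sum>k. ennreal (a k) * indicator (cball x (r k)) z)" for z
  proof -
    obtain k where "g z \<le> ennreal (a k) * indicator (cball x (r k)) z" using g by blast
    also have "\<dots> \<le> (\<Sum>k. ennreal (a k) * indicator (cball x (r k)) z)"
      by (rule sum_le_suminf[of _ "{k}", simplified]) auto
    finally show ?thesis .
  qed
  then have "(\<integral>\<^sup>+z. g z \<partial>lborel) \<le> (\<integral>\<^sup>+z. (\<Sum>k. ennreal (a k) * indicator (cball x (r k)) z) \<partial>lborel)"
    by (intro nn_integral_mono)
  also have "\<dots> = (\<Sum>k. \<integral>\<^sup>+z. ennreal (a k) * indicator (cball x (r k)) z \<partial>lborel)"
    by (intro nn_integral_suminf borel_measurable_times_ennreal borel_measurable_const
        borel_measurable_indicator) simp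
  also have "\<dots> = (\<Sum>k. ennreal (a k * (unit_ball_vol DIM('a) * r k ^ DIM('a))))"
  proof (rule suminf_cong)
    fix k
    show "(\<integral>\<^sup>+z. ennreal (a k) * indicator (cball x (r k)) z \<partial>lborel)
        = ennreal (a k * (unit_ball_vol DIM('a) * r k ^ DIM('a)))"
      using a[of k] r[of k] by (simp add: nn_integral_cmult_indicator emeasure_cball ennreal_mult)
  qed
  finally show ?thesis .
qed

lemma powr_realpow_swap:
  fixes x :: real
  assumes "0 < x"
  shows "(x powr a) ^ k = (x ^ k) powr a"
  using assms by (simp add: powr_power powr_realpow[symmetric] powr_powr mult.commute)

lemma nn_integral_norm_powr_far:
  fixes x :: "'a::euclidean_space" and b :: real
  defines "n \<equiv> DIM('a)"
  assumes \<rho>: "0 < \<rho>" and b: "n < b"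
  shows "(\<integral>\<^sup>+z. ennreal (far_kernel b \<rho> (x - z)) \<partial>lborel) \<le> ennreal (far_kernel_const n b * \<rho> powr (n - b))"
proof -
  define a where "a k = (\<rho> * 2 ^ k) powr (-b)" for k :: nat
  define r where "r k = \<rho> * (2 ^ k * 2)" for k :: nat
  have shell: "\<exists>k. ennreal (far_kernel b \<rho> (x - z)) \<le> ennreal (a k) * indicator (cball x (r k)) z" for z
  proof (cases "\<rho> \<le> norm (x - z)")
    case True
    then obtain k where k: "2 ^ k \<le> norm (x - z) / \<rho>" "norm (x - z) / \<rho> < 2 ^ (k + 1)"
      using \<rho> ex_dyadic_bracket[of "norm (x - z) / \<rho>"] by auto
    have "norm (x - z) powr (-b) \<le> a k"
      unfolding a_def using k(1) \<rho> b by (intro powr_mono2') (auto simp: field_simps)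
    moreover have "z \<in> cball x (r k)"
      unfolding r_def using k(2) \<rho> by (simp add: dist_norm field_simps)
    ultimately show ?thesis using True by (intro exI[of _ k]) (simp add: ennreal_leI far_kernel_def near_kernel_def)
  next
    case False
    then show ?thesis by (intro exI[of _ 0]) (auto simp: far_kernel_def near_kernel_def)
  qed
  have shell_integral: "a k * (unit_ball_vol n * r k ^ n)
      = 2 ^ n * unit_ball_vol n * \<rho> powr (n - b) * (2 powr (n - b)) ^ k" for k
  proof -
    define P :: real where "P = 2 ^ k"
    have P: "0 < P" by (simp add: P_def)
    have "(\<rho> * P) powr (-b) = \<rho> powr (-b) * P powr (-b)"
      using \<rho> P by (simp add: powr_mult)
    moreover have "(\<rho> * (P * 2)) ^ n = 2 ^ n * (\<rho> powr n * P powr n)"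
      using \<rho> P by (simp add: powr_realpow power_mult_distrib)
    moreover have "\<rho> powr (n - b) = \<rho> powr (-b) * \<rho> powr n" "P powr (n - b) = P powr (-b) * P powr n"
      by (simp_all add: powr_add[symmetric])
    ultimately show ?thesis
      unfolding a_def r_def powr_realpow_swap[of 2, simplified] P_def[symmetric] by (simp only: mult_ac)
  qed
  have q: "0 \<le> 2 powr (n - b)" "2 powr (n - b) < (1::real)"
    using b by (auto intro: powr_less_one)
  have "(\<integral>\<^sup>+z. ennreal (far_kernel b \<rho> (x - z)) \<partial>lborel) \<le> (\<Sum>k. ennreal (a k * (unit_ball_vol n * r k ^ n)))"
    unfolding n_def by (rule nn_integral_le_suminf_cball[OF shell]) (use \<rho> in \<open>simp_all add: a_def r_def\<close>)
  also have "\<dots> = (\<Sum>k. ennreal (2 ^ n * unit_ball_vol n * \<rho> powr (n - b) * (2 powr (n - b)) ^ k))"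
    by (simp only: shell_integral)
  also have "\<dots> = ennreal (far_kernel_const n b * \<rho> powr (n - b))"
    using q by (subst suminf_ennreal_geometric) (simp_all add: far_kernel_const_def)
  finally show ?thesis .
qed

lemma nn_integral_norm_powr_near:
  fixes x :: "'a::euclidean_space" and b :: real
  defines "n \<equiv> DIM('a)"
  assumes \<rho>: "0 < \<rho>" and b: "0 < b" "b < n"
  shows "(\<integral>\<^sup>+z. ennreal (near_kernel b \<rho> (x - z)) \<partial>lborel) \<le> ennreal (near_kernel_const n b * \<rho> powr (n - b))"
proof -
  define a where "a k = (\<rho> / (2 ^ k * 2)) powr (-b)" for k :: nat
  define r where "r k = \<rho> / 2 ^ k" for k :: nat
  have shell: "\<exists>k. ennreal (near_kernel b \<rho> (x - z)) \<le> ennreal (a k) * indicator (cball x (r k)) z" for z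
  proof (cases "0 < norm (x - z) \<and> norm (x - z) < \<rho>")
    case True
    then obtain k where k: "2 ^ k \<le> \<rho> / norm (x - z)" "\<rho> / norm (x - z) < 2 ^ (k + 1)"
      using ex_dyadic_bracket[of "\<rho> / norm (x - z)"] by auto
    have "norm (x - z) powr (-b) \<le> a k"
      unfolding a_def using k(2) True \<rho> b by (intro powr_mono2') (auto simp: field_simps)
    moreover have "z \<in> cball x (r k)"
      unfolding r_def using k(1) True by (simp add: dist_norm field_simps)
    ultimately show ?thesis using True by (intro exI[of _ k]) (simp add: ennreal_leI far_kernel_def near_kernel_def)
  next
    case False
    then show ?thesis by (intro exI[of _ 0]) (auto simp: far_kernel_def near_kernel_def)
  qed
  have shell_integral: "a k * (unit_ball_vol n * r k ^ n)
      = 2 powr b * unit_ball_vol n * \<rho> powr (n - b) * (2 powr (b - n)) ^ k" for k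
  proof -
    define P :: real where "P = 2 ^ k"
    have P: "0 < P" by (simp add: P_def)
    have "(\<rho> / (P * 2)) powr (-b) = \<rho> powr (-b) / (P * 2) powr (-b)"
      using \<rho> P by (simp add: powr_divide)
    also have "\<dots> = \<rho> powr (-b) * (P powr b * 2 powr b)"
      using \<rho> P by (simp add: powr_mult powr_minus field_simps)
    finally have "(\<rho> / (P * 2)) powr (-b) = \<rho> powr (-b) * (P powr b * 2 powr b)" .
    moreover have "(\<rho> / P) ^ n = \<rho> powr n * P powr (- n)"
      using \<rho> P by (simp add: powr_realpow[symmetric] powr_divide powr_minus field_simps)
    moreover have "\<rho> powr (n - b) = \<rho> powr (-b) * \<rho> powr n" "P powr (b - n) = P powr b * P powr (-n)"
      by (simp_all add: powr_add[symmetric])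
    ultimately show ?thesis
      unfolding a_def r_def powr_realpow_swap[of 2, simplified] P_def[symmetric] by (simp only: mult_ac)
  qed
  have q: "0 \<le> 2 powr (b - n)" "2 powr (b - n) < (1::real)"
    using b by (auto intro: powr_less_one)
  have "(\<integral>\<^sup>+z. ennreal (near_kernel b \<rho> (x - z)) \<partial>lborel) \<le> (\<Sum>k. ennreal (a k * (unit_ball_vol n * r k ^ n)))"
    unfolding n_def by (rule nn_integral_le_suminf_cball[OF shell]) (use \<rho> in \<open>simp_all add: a_def r_def\<close>)
  also have "\<dots> = (\<Sum>k. ennreal (2 powr b * unit_ball_vol n * \<rho> powr (n - b) * (2 powr (b - n)) ^ k))"
    by (simp only: shell_integral)
  also have "\<dots> = ennreal (near_kernel_const n b * \<rho> powr (n - b))"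
    using q by (subst suminf_ennreal_geometric) (simp_all add: near_kernel_const_def)
  finally show ?thesis .
qed

section \<open>Smooth compactly supported cutoffs\<close>

lemma smooth_differentiable_on: "smooth \<eta> \<Longrightarrow> \<eta> differentiable_on UNIV"
  unfolding smooth_def by (drule spec[of _ "[]"]) simp

lemma smooth_differentiable: "smooth \<eta> \<Longrightarrow> \<eta> differentiable (at y)"
  using smooth_differentiable_on by (simp add: differentiable_on_def)

lemma smooth_continuous_on: "smooth \<eta> \<Longrightarrow> continuous_on UNIV \<eta>"
  by (rule differentiable_imp_continuous_on[OF smooth_differentiable_on])

lemma smooth_partial_continuous_on: "smooth \<eta> \<Longrightarrow> continuous_on UNIV (partial i \<eta>)"
  unfolding smooth_def by (drule spec[of _ "[i]"]) (simp add: differentiable_imp_continuous_on)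

lemma partial_eq_has_derivative:
  assumes D: "(\<eta> has_derivative D) (at y)"
  shows "partial i \<eta> y = D (axis i 1)"
proof -
  have line: "((\<lambda>t::real. y + t *\<^sub>R axis i 1) has_derivative (\<lambda>t. t *\<^sub>R axis i 1)) (at 0)"
    by (auto intro!: derivative_eq_intros)
  have "((\<lambda>t. \<eta> (y + t *\<^sub>R axis i 1)) has_derivative (\<lambda>t. D (t *\<^sub>R axis i 1))) (at 0)"
    using diff_chain_at[OF line, of \<eta> D] D by (simp add: o_def)
  then have "((\<lambda>t. \<eta> (y + t *\<^sub>R axis i 1)) has_field_derivative D (axis i 1)) (at 0)"
    by (rule has_derivative_imp_has_field_derivative)
       (simp add: linear_scale[OF has_derivative_linear[OF D]])
  then show ?thesis unfolding partial_def by (rule DERIV_imp_deriv)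
qed

lemma has_derivative_eq_inner_gradient:
  assumes D: "(\<eta> has_derivative D) (at y)"
  shows "D h = (\<chi> i. partial i \<eta> y) \<bullet> h"
proof -
  have lin: "linear D" using D has_derivative_linear by blast
  have "D h = D (\<Sum>i\<in>UNIV. (h$i) *\<^sub>R axis i 1)"
    using basis_expansion[of h] by (simp add: scalar_mult_eq_scaleR)
  also have "\<dots> = (\<Sum>i\<in>UNIV. (h$i) * D (axis i 1))"
    by (simp add: linear_sum[OF lin] linear_scale[OF lin])
  also have "\<dots> = (\<chi> i. partial i \<eta> y) \<bullet> h"
    by (simp add: inner_vec_def partial_eq_has_derivative[OF D] mult.commute)
  finally show ?thesis .
qed

lemma bounded_range_if_compact_support:
  fixes g :: "'a::topological_space \<Rightarrow> 'b::real_normed_vector"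
  assumes "continuous_on UNIV g" "compact K" "\<And>x. x \<notin> K \<Longrightarrow> g x = 0"
  shows "bounded (range g)"
proof -
  have "range g \<subseteq> insert 0 (g ` K)" using assms(3) by auto
  moreover have "compact (g ` K)"
    using assms(1,2) by (intro compact_continuous_image) (auto intro: continuous_on_subset)
  then have "bounded (insert 0 (g ` K))" by (simp add: compact_imp_bounded)
  ultimately show ?thesis by (rule bounded_subset[rotated])
qed

lemma ex_SUP_ennreal_eq_upper_bound:
  fixes g :: "'a \<Rightarrow> real"
  assumes bdd: "bounded (range g)" and vanish: "\<And>x. x \<notin> U \<Longrightarrow> g x = 0"
  shows "\<exists>M\<ge>0. (SUP x\<in>U. ennreal (g x)) = ennreal M \<and> (\<forall>x. g x \<le> M)"
proof -
  obtain B where B: "\<And>x. \<bar>g x\<bar> \<le> B" using bdd by (auto simp: bounded_iff)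
  have "(SUP x\<in>U. ennreal (g x)) \<le> ennreal B"
    by (intro SUP_least ennreal_leI) (rule abs_le_D1[OF B])
  then have "(SUP x\<in>U. ennreal (g x)) \<noteq> top" by (rule neq_top_trans[OF ennreal_neq_top])
  then obtain M where M: "0 \<le> M" "(SUP x\<in>U. ennreal (g x)) = ennreal M"
    by (cases "SUP x\<in>U. ennreal (g x)" rule: ennreal_cases) auto
  have "g x \<le> M" for x
  proof (cases "x \<in> U")
    case True
    then have "ennreal (g x) \<le> ennreal M" using M(2) by (metis SUP_upper)
    then show ?thesis by (rule iffD1[OF ennreal_le_iff[OF M(1)]])
  qed (use vanish M(1) in simp)
  with M show ?thesis by blast
qed

lemma C0_inf_vanishes:
  assumes "\<eta> \<in> C0_inf U" "x \<notin> U"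
  shows "\<eta> x = 0"
proof -
  have "closure {x. \<eta> x \<noteq> 0} \<subseteq> U" using assms(1) by (simp add: C0_inf_def)
  then have "x \<notin> closure {x. \<eta> x \<noteq> 0}" using assms(2) by blast
  then show ?thesis using closure_subset[of "{x. \<eta> x \<noteq> 0}"] by blast
qed

lemma C0_inf_borel_measurable: "\<eta> \<in> C0_inf U \<Longrightarrow> \<eta> \<in> borel_measurable borel"
  by (intro borel_measurable_continuous_onI smooth_continuous_on) (simp add: C0_inf_def)

lemma not_in_closure_support:
  assumes "x \<notin> closure {x. f x \<noteq> 0}"
  shows "f x = 0"
  using assms closure_subset[of "{x. f x \<noteq> 0}"] by blast

lemma C0_inf_sup_norm:
  assumes "\<eta> \<in> C0_inf U"
  obtains M where "0 \<le> M" "sup_norm \<eta> U = ennreal M" "\<And>x. \<bar>\<eta> x\<bar> \<le> M"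
proof -
  have sm: "smooth \<eta>" and K: "compact (closure {x. \<eta> x \<noteq> 0})"
    using assms by (simp_all add: C0_inf_def)
  have "continuous_on UNIV (\<lambda>x. \<bar>\<eta> x\<bar>)"
    by (rule continuous_on_rabs[OF smooth_continuous_on[OF sm]])
  then have bdd: "bounded (range (\<lambda>x. \<bar>\<eta> x\<bar>))"
    by (rule bounded_range_if_compact_support[OF _ K]) (metis abs_0 not_in_closure_support)
  have vanish: "\<bar>\<eta> x\<bar> = 0" if "x \<notin> U" for x
    using C0_inf_vanishes[OF assms that] by simp
  obtain M where "0 \<le> M" "(SUP x\<in>U. ennreal \<bar>\<eta> x\<bar>) = ennreal M" "\<forall>x. \<bar>\<eta> x\<bar> \<le> M"
    using ex_SUP_ennreal_eq_upper_bound[OF bdd vanish] by blast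
  then show ?thesis using that by (simp add: sup_norm_def)
qed

lemma C0_inf_lipschitz:
  assumes "\<eta> \<in> C0_inf U"
  obtains L where "0 \<le> L" "grad_sup_norm \<eta> U = ennreal L" "\<And>x y. \<bar>\<eta> x - \<eta> y\<bar> \<le> L * norm (x - y)"
proof -
  let ?K = "closure {x. \<eta> x \<noteq> 0}"
  define G where "G y = (\<chi> i. partial i \<eta> y)" for y
  have sm: "smooth \<eta>" and K: "compact ?K" "?K \<subseteq> U" using assms by (simp_all add: C0_inf_def)
  have G0: "G y = 0" if "y \<notin> ?K" for y
  proof -
    have "(\<eta> has_derivative (\<lambda>_. 0)) (at y)"
      by (rule has_derivative_transform_within_open[of "\<lambda>_. 0" _ _ UNIV "- ?K"])
         (use that not_in_closure_support in auto)
    then show ?thesis unfolding G_def vec_eq_iff using partial_eq_has_derivative by simp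
  qed
  have "continuous_on UNIV (\<lambda>y. norm (G y))"
    unfolding G_def using smooth_partial_continuous_on[OF sm] by (intro continuous_intros) auto
  then have bdd: "bounded (range (\<lambda>y. norm (G y)))"
    by (rule bounded_range_if_compact_support[OF _ K(1)]) (simp add: G0)
  have vanish: "norm (G y) = 0" if "y \<notin> U" for y
    using that K(2) G0 by auto
  obtain L where L: "0 \<le> L" "(SUP y\<in>U. ennreal (norm (G y))) = ennreal L" "\<forall>y. norm (G y) \<le> L"
    using ex_SUP_ennreal_eq_upper_bound[OF bdd vanish] by blast
  have D: "(\<eta> has_derivative frechet_derivative \<eta> (at y)) (at y)" for y
    using smooth_differentiable[OF sm] frechet_derivative_works by blast
  have "onorm (frechet_derivative \<eta> (at y)) \<le> L" for y
  proof (rule onorm_le)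
    fix h
    have "norm (frechet_derivative \<eta> (at y) h) = \<bar>G y \<bullet> h\<bar>"
      using has_derivative_eq_inner_gradient[OF D] by (simp add: G_def)
    also have "\<dots> \<le> norm (G y) * norm h" by (rule Cauchy_Schwarz_ineq2)
    also have "\<dots> \<le> L * norm h" using L(3) by (simp add: mult_right_mono)
    finally show "norm (frechet_derivative \<eta> (at y) h) \<le> L * norm h" .
  qed
  then have "norm (\<eta> x - \<eta> y) \<le> L * norm (x - y)" for x y
    using D by (intro differentiable_bound[where S=UNIV]) auto
  then show ?thesis
    using that L(1,2) by (simp add: grad_sup_norm_def G_def)
qed

section \<open>Square roots, \<open>L\<^sup>2\<close> norms and the dual norm\<close>

lemma ennsqrt_ennreal: "0 \<le> x \<Longrightarrow> ennsqrt (ennreal x) = ennreal (sqrt x)"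
  by (simp add: ennsqrt_def)

lemma ennsqrt_top [simp]: "ennsqrt top = top"
  by (simp add: ennsqrt_def)

lemma ennsqrt_mono: "a \<le> b \<Longrightarrow> ennsqrt a \<le> ennsqrt b"
proof (cases b rule: ennreal_cases)
  case (real y)
  moreover assume "a \<le> b"
  ultimately obtain x where "a = ennreal x" "0 \<le> x" "x \<le> y"
    by (cases a rule: ennreal_cases) (auto simp: top_unique)
  with real show ?thesis by (simp add: ennsqrt_ennreal)
qed simp

lemma ennsqrt_mult: "ennsqrt (a * b) = ennsqrt a * ennsqrt b"
proof (cases a rule: ennreal_cases; cases b rule: ennreal_cases)
  fix x y :: real
  assume "a = ennreal x" "0 \<le> x" "b = ennreal y" "0 \<le> y"
  then show ?thesis by (simp add: ennsqrt_ennreal real_sqrt_mult ennreal_mult flip: ennreal_mult)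
qed (auto simp: ennsqrt_def ennreal_mult_top ennreal_top_mult)

lemma ennsqrt_add_le: "ennsqrt (a + b) \<le> ennsqrt a + ennsqrt b"
proof (cases a rule: ennreal_cases; cases b rule: ennreal_cases)
  fix x y :: real
  assume "a = ennreal x" "0 \<le> x" "b = ennreal y" "0 \<le> y"
  then show ?thesis
    by (simp add: ennsqrt_ennreal sqrt_add_le_add_sqrt flip: ennreal_plus)
qed simp_all

lemma ennsqrt_power2 [simp]: "ennsqrt (a\<^sup>2) = a"
  by (cases a rule: ennreal_cases) (simp_all add: ennsqrt_ennreal ennreal_power)

lemma L2_sq_mono: "A \<subseteq> B \<Longrightarrow> L2_sq v A \<le> L2_sq v B"
  unfolding L2_sq_def by (intro nn_integral_mono) (auto simp: indicator_def)

lemma L2_norm_le_Hs_norm: "L2_norm u A \<le> Hs_norm u A s"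
  unfolding L2_norm_def Hs_norm_def by (intro ennsqrt_mono) simp

lemma abs_set_integral_mult_le_L2_norm:
  fixes g u :: "R3 \<Rightarrow> real"
  assumes [measurable]: "A \<in> sets borel" "g \<in> borel_measurable borel" "u \<in> borel_measurable borel"
  shows "ennreal \<bar>LINT x:A|lborel. g x * u x\<bar> \<le> L2_norm g A * L2_norm u A"
proof (cases "set_integrable lborel A (\<lambda>x. g x * u x)")
  case True
  define I where "I = (\<integral>\<^sup>+x. (ennreal \<bar>g x\<bar> * indicator A x) * (ennreal \<bar>u x\<bar> * indicator A x) \<partial>lborel)"
  have "ennreal \<bar>LINT x:A|lborel. g x * u x\<bar> \<le> (\<integral>\<^sup>+x. ennreal (norm (indicator A x *\<^sub>R (g x * u x))) \<partial>lborel)"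
    using integral_norm_bound_ennreal[OF True[unfolded set_integrable_def]]
    by (simp add: set_lebesgue_integral_def)
  also have "\<dots> = I"
    unfolding I_def by (intro nn_integral_cong) (auto simp: indicator_def abs_mult ennreal_mult)
  also have "\<dots> = ennsqrt (I\<^sup>2)" by simp
  also have "\<dots> \<le> ennsqrt (L2_sq g A * L2_sq u A)"
  proof (rule ennsqrt_mono)
    have sq: "(ennreal \<bar>v x\<bar> * indicator A x)\<^sup>2 = ennreal ((v x)\<^sup>2) * indicator A x" for v :: "R3 \<Rightarrow> real" and x
      by (auto simp: indicator_def ennreal_power)
    show "I\<^sup>2 \<le> L2_sq g A * L2_sq u A"
      using Cauchy_Schwarz_nn_integral[of "\<lambda>x. ennreal \<bar>g x\<bar> * indicator A x" lborel
          "\<lambda>x. ennreal \<bar>u x\<bar> * indicator A x"]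
      by (simp add: I_def L2_sq_def sq)
  qed
  also have "\<dots> = L2_norm g A * L2_norm u A" by (simp add: L2_norm_def ennsqrt_mult)
  finally show ?thesis .
next
  case False
  then show ?thesis by (simp add: set_lebesgue_integral_def set_integrable_def not_integrable_integral_eq)
qed

lemma L2_sq_mult_le:
  fixes \<eta> f :: "R3 \<Rightarrow> real"
  assumes [measurable]: "f \<in> borel_measurable borel" "B \<in> sets borel"
    and bound: "\<And>x. \<bar>\<eta> x\<bar> \<le> M" and vanish: "\<And>x. x \<notin> B \<Longrightarrow> \<eta> x = 0"
  shows "L2_sq (\<lambda>x. \<eta> x * f x) A \<le> ennreal (M\<^sup>2) * L2_sq f B"
proof -
  have "ennreal ((\<eta> x * f x)\<^sup>2) * indicator A x \<le> ennreal (M\<^sup>2) * (ennreal ((f x)\<^sup>2) * indicator B x)" for x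
  proof (cases "x \<in> B")
    case True
    have "(\<eta> x)\<^sup>2 \<le> M\<^sup>2"
      using power_mono[OF bound[of x] abs_ge_zero, of 2] by simp
    then have "(\<eta> x * f x)\<^sup>2 \<le> M\<^sup>2 * (f x)\<^sup>2"
      by (simp add: power_mult_distrib mult_right_mono)
    then show ?thesis
      using True by (auto simp: indicator_def ennreal_mult[symmetric] intro: ennreal_leI)
  qed (simp add: vanish)
  then have "L2_sq (\<lambda>x. \<eta> x * f x) A \<le> (\<integral>\<^sup>+x. ennreal (M\<^sup>2) * (ennreal ((f x)\<^sup>2) * indicator B x) \<partial>lborel)"
    unfolding L2_sq_def by (rule nn_integral_mono)
  also have "\<dots> = ennreal (M\<^sup>2) * L2_sq f B"
    unfolding L2_sq_def by (rule nn_integral_cmult) measurable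
  finally show ?thesis .
qed

lemma L2_norm_mult_le:
  fixes \<eta> f :: "R3 \<Rightarrow> real"
  assumes "f \<in> borel_measurable borel" "B \<in> sets borel" "\<And>x. \<bar>\<eta> x\<bar> \<le> M" "\<And>x. x \<notin> B \<Longrightarrow> \<eta> x = 0"
  shows "L2_norm (\<lambda>x. \<eta> x * f x) A \<le> ennreal M * L2_norm f B"
proof -
  have "0 \<le> M" using assms(3) abs_ge_zero order_trans by blast
  then show ?thesis
    using ennsqrt_mono[OF L2_sq_mult_le[OF assms]]
    by (simp add: L2_norm_def ennsqrt_mult ennsqrt_ennreal)
qed

lemma Hneg_norm_mult_le:
  fixes \<eta> f :: "R3 \<Rightarrow> real"
  assumes [measurable]: "\<Omega> \<in> sets borel" "f \<in> borel_measurable borel" "\<eta> \<in> borel_measurable borel"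
    "B \<in> sets borel"
    and bound: "\<And>x. \<bar>\<eta> x\<bar> \<le> M" and vanish: "\<And>x. x \<notin> B \<Longrightarrow> \<eta> x = 0"
  shows "Hneg_norm (\<lambda>x. \<eta> x * f x) \<Omega> s \<le> ennreal M * L2_norm f B"
  unfolding Hneg_norm_def
proof (rule SUP_least)
  fix u assume "u \<in> {u \<in> Htilde s \<Omega>. Hs_norm u UNIV s \<noteq> 0}"
  then have [measurable]: "u \<in> borel_measurable borel" and N: "Hs_norm u UNIV s \<noteq> 0"
    by (auto simp: Htilde_def)
  have "ennreal \<bar>LINT x:\<Omega>|lborel. \<eta> x * f x * u x\<bar> \<le> L2_norm (\<lambda>x. \<eta> x * f x) \<Omega> * L2_norm u \<Omega>"
    by (rule abs_set_integral_mult_le_L2_norm) measurable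
  also have "\<dots> \<le> (ennreal M * L2_norm f B) * Hs_norm u UNIV s"
  proof (intro mult_mono)
    show "L2_norm (\<lambda>x. \<eta> x * f x) \<Omega> \<le> ennreal M * L2_norm f B"
      by (rule L2_norm_mult_le[OF _ _ bound vanish]) measurable
    have "L2_norm u \<Omega> \<le> L2_norm u UNIV"
      unfolding L2_norm_def by (intro ennsqrt_mono L2_sq_mono) simp
    then show "L2_norm u \<Omega> \<le> Hs_norm u UNIV s"
      using L2_norm_le_Hs_norm order_trans by blast
  qed simp_all
  finally show "ennreal \<bar>LINT x:\<Omega>|lborel. \<eta> x * f x * u x\<bar> / Hs_norm u UNIV s \<le> ennreal M * L2_norm f B"
    using N by (intro divide_le_posI_ennreal) (simp_all add: zero_less_iff_neq_zero mult.commute)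
qed

section \<open>The cutoff estimate in \<open>H\<^sup>1\<^sup>-\<^sup>s\<close>\<close>

lemma lipschitz_quotient_le_kernels:
  fixes \<eta> :: "'a::real_normed_vector \<Rightarrow> real"
  assumes \<rho>: "0 < \<rho>" and M: "\<And>y. \<bar>\<eta> y\<bar> \<le> M"
    and L: "\<And>x y. \<bar>\<eta> x - \<eta> y\<bar> \<le> L * norm (x - y)"
  shows "(\<eta> x - \<eta> z)\<^sup>2 / norm (x - z) powr b
    \<le> L\<^sup>2 * near_kernel (b - 2) \<rho> (x - z) + 4 * M\<^sup>2 * far_kernel b \<rho> (x - z)"
proof -
  define d where "d = norm (x - z)"
  consider "d = 0" | "0 < d" "d < \<rho>" | "\<rho> \<le> d" by (force simp: d_def)
  then show ?thesis
  proof cases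
    case 1
    then show ?thesis by (simp add: d_def near_kernel_def far_kernel_def)
  next
    case 2
    have "\<bar>\<eta> x - \<eta> z\<bar> \<le> L * d" using L[of x z] by (simp add: d_def)
    then have "(\<eta> x - \<eta> z)\<^sup>2 \<le> (L * d)\<^sup>2"
      using power_mono[of "\<bar>\<eta> x - \<eta> z\<bar>" "L * d" 2] by simp
    then have "(\<eta> x - \<eta> z)\<^sup>2 / d powr b \<le> L\<^sup>2 * d\<^sup>2 / d powr b"
      by (simp add: divide_right_mono power_mult_distrib)
    also have "\<dots> = L\<^sup>2 * d powr (-(b - 2))"
      using 2 by (simp add: powr_minus_divide powr_diff powr_realpow[symmetric] flip: powr_numeral)
    finally show ?thesis using 2 by (simp add: d_def near_kernel_def far_kernel_def)
  next
    case 3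
    have "\<bar>\<eta> x - \<eta> z\<bar> \<le> 2 * M" using M[of x] M[of z] by linarith
    then have "(\<eta> x - \<eta> z)\<^sup>2 \<le> (2 * M)\<^sup>2"
      using power_mono[of "\<bar>\<eta> x - \<eta> z\<bar>" "2 * M" 2] by simp
    then have "(\<eta> x - \<eta> z)\<^sup>2 / d powr b \<le> 4 * M\<^sup>2 / d powr b"
      by (simp add: divide_right_mono power_mult_distrib)
    also have "\<dots> = 4 * M\<^sup>2 * d powr (-b)"
      by (simp add: powr_minus divide_inverse)
    finally show ?thesis
      using 3 \<rho> by (simp add: d_def near_kernel_def far_kernel_def)
  qed
qed

lemma nn_integral_lipschitz_quotient_le:
  fixes \<eta> :: "'a::euclidean_space \<Rightarrow> real"
  defines "n \<equiv> DIM('a)"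
  assumes \<rho>: "0 < \<rho>" and b: "2 < b" "n < b" "b < n + 2" and M: "\<And>y. \<bar>\<eta> y\<bar> \<le> M"
    and L: "0 \<le> L" "\<And>x y. \<bar>\<eta> x - \<eta> y\<bar> \<le> L * norm (x - y)"
  shows "(\<integral>\<^sup>+z. ennreal ((\<eta> x - \<eta> z)\<^sup>2 / norm (x - z) powr b) \<partial>lborel)
    \<le> ennreal (L\<^sup>2 * near_kernel_const n (b - 2) * \<rho> powr (n + 2 - b)
        + 4 * M\<^sup>2 * far_kernel_const n b * \<rho> powr (n - b))"
proof -
  have "(\<integral>\<^sup>+z. ennreal ((\<eta> x - \<eta> z)\<^sup>2 / norm (x - z) powr b) \<partial>lborel)
      \<le> (\<integral>\<^sup>+z. ennreal (L\<^sup>2) * ennreal (near_kernel (b - 2) \<rho> (x - z))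
          + ennreal (4 * M\<^sup>2) * ennreal (far_kernel b \<rho> (x - z)) \<partial>lborel)"
    using lipschitz_quotient_le_kernels[OF \<rho> M L(2)]
    by (intro nn_integral_mono) (simp add: ennreal_plus[symmetric] ennreal_mult[symmetric] ennreal_leI
        del: ennreal_plus)
  also have "\<dots> = ennreal (L\<^sup>2) * (\<integral>\<^sup>+z. ennreal (near_kernel (b - 2) \<rho> (x - z)) \<partial>lborel)
      + ennreal (4 * M\<^sup>2) * (\<integral>\<^sup>+z. ennreal (far_kernel b \<rho> (x - z)) \<partial>lborel)"
    by (simp add: nn_integral_add nn_integral_cmult)
  also have "\<dots> \<le> ennreal (L\<^sup>2) * ennreal (near_kernel_const n (b - 2) * \<rho> powr (n - (b - 2)))
      + ennreal (4 * M\<^sup>2) * ennreal (far_kernel_const n b * \<rho> powr (n - b))"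
    unfolding n_def using b \<rho>
    by (intro add_mono mult_left_mono nn_integral_norm_powr_near nn_integral_norm_powr_far)
       (simp_all add: n_def)
  also have "\<dots> = ennreal (L\<^sup>2 * near_kernel_const n (b - 2) * \<rho> powr (real n + 2 - b)
        + 4 * M\<^sup>2 * far_kernel_const n b * \<rho> powr (n - b))"
  proof -
    have Kn: "0 \<le> near_kernel_const n (b - 2)" and Kf: "0 \<le> far_kernel_const n b"
      using b by (simp_all add: near_kernel_const_nonneg far_kernel_const_nonneg)
    have "\<rho> powr (n - (b - 2)) = \<rho> powr (real n + 2 - b)" by (simp add: algebra_simps)
    moreover have "ennreal (L\<^sup>2 * near_kernel_const n (b - 2) * \<rho> powr (real n + 2 - b)
        + 4 * M\<^sup>2 * far_kernel_const n b * \<rho> powr (n - b))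
      = ennreal (L\<^sup>2 * near_kernel_const n (b - 2) * \<rho> powr (real n + 2 - b))
        + ennreal (4 * M\<^sup>2 * far_kernel_const n b * \<rho> powr (n - b))"
      using Kn Kf by (intro ennreal_plus) simp_all
    ultimately show ?thesis using Kn Kf by (simp add: ennreal_mult' mult.assoc)
  qed
  finally show ?thesis .
qed

lemma product_difference_sq_le:
  fixes a b u v :: real
  assumes "\<bar>b\<bar> \<le> M"
  shows "(a * u - b * v)\<^sup>2 \<le> 2 * M\<^sup>2 * (u - v)\<^sup>2 + 2 * u\<^sup>2 * (a - b)\<^sup>2"
proof -
  have "(a * u - b * v)\<^sup>2 = (b * (u - v) + u * (a - b))\<^sup>2" by algebra
  also have "\<dots> \<le> 2 * (b * (u - v))\<^sup>2 + 2 * (u * (a - b))\<^sup>2"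
    using zero_le_power2[of "b * (u - v) - u * (a - b)"] by (simp add: power2_eq_square algebra_simps)
  also have "\<dots> \<le> 2 * M\<^sup>2 * (u - v)\<^sup>2 + 2 * u\<^sup>2 * (a - b)\<^sup>2"
    using power_mono[OF assms abs_ge_zero, of 2] by (simp add: power_mult_distrib mult_right_mono)
  finally show ?thesis .
qed

lemma norm_diff_ge_outside_ball:
  assumes "x \<in> ball x0 (c * R)" "z \<notin> ball x0 R"
  shows "(1 - c) * R \<le> norm (x - z)"
  using assms norm_triangle_ineq[of "x0 - x" "x - z"] by (simp add: dist_norm algebra_simps)

lemma norm_diff_ge_outside_ball_center:
  assumes "z \<in> ball x0 (c * R)" "x \<notin> ball x0 R" "0 \<le> c"
  shows "(1 - c) * norm (x0 - x) \<le> norm (x - z)"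
proof -
  have "c * R \<le> c * norm (x0 - x)" using assms by (simp add: dist_norm mult_left_mono)
  then show ?thesis
    using assms norm_triangle_ineq[of "x0 - z" "z - x"] by (simp add: dist_norm algebra_simps norm_minus_commute)
qed

lemma cutoff_product_quotient_le:
  fixes \<eta> f :: "'a::real_normed_vector \<Rightarrow> real"
  assumes R: "0 < R" and c: "0 < c" "c < 1" and b: "0 < b" and M: "\<And>y. \<bar>\<eta> y\<bar> \<le> M"
    and vanish: "\<And>y. y \<notin> ball x0 (c * R) \<Longrightarrow> \<eta> y = 0"
  defines "B \<equiv> ball x0 R"
  shows "(\<eta> x * f x - \<eta> z * f z)\<^sup>2 / norm (x - z) powr b \<le>
      2 * M\<^sup>2 * (indicator B x * indicator B z * ((f x - f z)\<^sup>2 / norm (x - z) powr b))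
    + 2 * (indicator B x * (f x)\<^sup>2) * ((\<eta> x - \<eta> z)\<^sup>2 / norm (x - z) powr b)
    + M\<^sup>2 * (1 - c) powr (-b) * far_kernel b R (x0 - x) * (indicator B z * (f z)\<^sup>2)
    + M\<^sup>2 * (indicator B x * (f x)\<^sup>2) * far_kernel b ((1 - c) * R) (x - z)"
  (is "?D \<le> ?T1 + ?T2 + ?T3 + ?T4")
proof -
  have sq: "(\<eta> y)\<^sup>2 \<le> M\<^sup>2" for y
    using power_mono[OF M[of y] abs_ge_zero, of 2] by simp
  have T: "0 \<le> ?T1" "0 \<le> ?T2" "0 \<le> ?T3" "0 \<le> ?T4"
    by (simp_all add: c(2) less_imp_le)
  have cR: "ball x0 (c * R) \<subseteq> B" unfolding B_def using c R by (intro subset_ball) simp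
  consider "x \<in> B" "z \<in> B" | "x \<in> ball x0 (c * R)" "z \<notin> B" | "x \<notin> B" "z \<in> ball x0 (c * R)"
    | "\<eta> x = 0" "\<eta> z = 0"
    using cR vanish
    by (cases "x \<in> ball x0 (c * R)"; cases "z \<in> ball x0 (c * R)"; cases "x \<in> B"; cases "z \<in> B") auto
  then show ?thesis
  proof cases
    case 1
    have "?D \<le> (2 * M\<^sup>2 * (f x - f z)\<^sup>2 + 2 * (f x)\<^sup>2 * (\<eta> x - \<eta> z)\<^sup>2) / norm (x - z) powr b"
      by (intro divide_right_mono product_difference_sq_le M) simp
    also have "\<dots> = ?T1 + ?T2" using 1 by (simp add: add_divide_distrib)
    finally show ?thesis using T by linarith
  next
    case 2
    have far: "(1 - c) * R \<le> norm (x - z)"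
      using 2 by (intro norm_diff_ge_outside_ball) (simp_all add: B_def)
    have "\<eta> z = 0" using 2 cR by (intro vanish) auto
    then have "?D = (\<eta> x)\<^sup>2 * (f x)\<^sup>2 / norm (x - z) powr b"
      by (simp add: power_mult_distrib)
    also have "\<dots> \<le> M\<^sup>2 * (f x)\<^sup>2 / norm (x - z) powr b"
      using sq[of x] by (intro divide_right_mono mult_right_mono) simp_all
    also have "\<dots> = ?T4"
      using 2 cR far c R by (auto simp: far_kernel_def powr_minus divide_inverse)
    finally show ?thesis using T by linarith
  next
    case 3
    have far: "(1 - c) * norm (x0 - x) \<le> norm (x - z)"
      using 3 c by (intro norm_diff_ge_outside_ball_center) (simp_all add: B_def)
    have R_le: "R \<le> norm (x0 - x)" using 3 by (simp add: B_def dist_norm)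
    have pos: "0 < (1 - c) * norm (x0 - x)" using c R R_le by (intro mult_pos_pos) auto
    have "\<eta> x = 0" using 3 cR by (intro vanish) auto
    then have "?D = (\<eta> z)\<^sup>2 * (f z)\<^sup>2 / norm (x - z) powr b"
      by (simp add: power_mult_distrib)
    also have "\<dots> \<le> M\<^sup>2 * (f z)\<^sup>2 / ((1 - c) * norm (x0 - x)) powr b"
      using sq[of z] far pos b c R R_le by (intro frac_le mult_right_mono powr_mono2) auto
    also have "\<dots> = ?T3"
      using 3 cR R_le pos c by (auto simp: far_kernel_def powr_mult powr_minus divide_inverse)
    finally show ?thesis using T by linarith
  next
    case 4
    then show ?thesis using T by simp
  qed
qed
lemma nn_integral_cutoff_product_quotient_slice_le:
  fixes \<eta> f :: "'a::euclidean_space \<Rightarrow> real"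
  defines "n \<equiv> DIM('a)"
  assumes R: "0 < R" and c: "0 < c" "c < 1" and b: "2 < b" "n < b" "b < n + 2"
    and [measurable]: "f \<in> borel_measurable borel" "\<eta> \<in> borel_measurable borel"
    and M: "\<And>y. \<bar>\<eta> y\<bar> \<le> M" and L: "0 \<le> L" "\<And>x y. \<bar>\<eta> x - \<eta> y\<bar> \<le> L * norm (x - y)"
    and vanish: "\<And>y. y \<notin> ball x0 (c * R) \<Longrightarrow> \<eta> y = 0"
  defines "B \<equiv> ball x0 R"
    and "E \<equiv> L\<^sup>2 * near_kernel_const n (b - 2) * R powr (real n + 2 - b)
      + 4 * M\<^sup>2 * far_kernel_const n b * R powr (n - b)"
    and "G \<equiv> M\<^sup>2 * far_kernel_const n b * ((1 - c) * R) powr (n - b)"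
  shows "(\<integral>\<^sup>+z. ennreal ((\<eta> x * f x - \<eta> z * f z)\<^sup>2 / norm (x - z) powr b) \<partial>lborel)
    \<le> ennreal (2 * M\<^sup>2) * ((\<integral>\<^sup>+z\<in>B. ennreal ((f x - f z)\<^sup>2 / norm (x - z) powr b) \<partial>lborel) * indicator B x)
      + ennreal (2 * E + G) * (ennreal ((f x)\<^sup>2) * indicator B x)
      + ennreal (M\<^sup>2 * (1 - c) powr (-b)) * ennreal (far_kernel b R (x0 - x))
        * (\<integral>\<^sup>+z\<in>B. ennreal ((f z)\<^sup>2) \<partial>lborel)"
proof -
  have [measurable]: "B \<in> sets borel" by (simp add: B_def)
  define \<delta> where "\<delta> = (1 - c) * R"
  define fB where "fB z = ennreal ((f z)\<^sup>2) * indicator B z" for z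
  define qf where "qf z = (f x - f z)\<^sup>2 / norm (x - z) powr b" for z
  define q\<eta> where "q\<eta> z = (\<eta> x - \<eta> z)\<^sup>2 / norm (x - z) powr b" for z
  have q: "0 \<le> qf z" "0 \<le> q\<eta> z" for z by (simp_all add: qf_def q\<eta>_def)
  have [measurable]: "fB \<in> borel_measurable borel" unfolding fB_def by measurable
  define T1 where "T1 z = ennreal (2 * M\<^sup>2) * indicator B x * (ennreal (qf z) * indicator B z)" for z
  define T2 where "T2 z = ennreal 2 * fB x * ennreal (q\<eta> z)" for z
  define T3 where "T3 z = ennreal (M\<^sup>2 * (1 - c) powr (-b)) * ennreal (far_kernel b R (x0 - x)) * fB z" for z
  define T4 where "T4 z = ennreal (M\<^sup>2) * fB x * ennreal (far_kernel b \<delta> (x - z))" for z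
  have [measurable]: "T1 \<in> borel_measurable borel" "T2 \<in> borel_measurable borel"
    "T3 \<in> borel_measurable borel" "T4 \<in> borel_measurable borel"
    unfolding T1_def T2_def T3_def T4_def fB_def qf_def q\<eta>_def by measurable
  have E: "0 \<le> E" using b L unfolding E_def
    by (intro add_nonneg_nonneg mult_nonneg_nonneg near_kernel_const_nonneg far_kernel_const_nonneg) simp_all
  have G: "0 \<le> G" using b unfolding G_def by (intro mult_nonneg_nonneg far_kernel_const_nonneg) simp_all
  have "ennreal ((\<eta> x * f x - \<eta> z * f z)\<^sup>2 / norm (x - z) powr b) \<le> T1 z + T2 z + T3 z + T4 z" for z
  proof -
    have "0 < b" using b by simp
    from cutoff_product_quotient_le[OF R c this M vanish, where f = f and x = x and z = z]
    have "ennreal ((\<eta> x * f x - \<eta> z * f z)\<^sup>2 / norm (x - z) powr b) \<le> ennreal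
        (2 * M\<^sup>2 * (indicator B x * indicator B z * qf z) + 2 * (indicator B x * (f x)\<^sup>2) * q\<eta> z
        + M\<^sup>2 * (1 - c) powr (-b) * far_kernel b R (x0 - x) * (indicator B z * (f z)\<^sup>2)
        + M\<^sup>2 * (indicator B x * (f x)\<^sup>2) * far_kernel b \<delta> (x - z))"
      unfolding B_def \<delta>_def qf_def q\<eta>_def by (rule ennreal_leI)
    also have "\<dots> = T1 z + T2 z + T3 z + T4 z"
      unfolding T1_def T2_def T3_def T4_def fB_def
      using q[of z] by (cases "x \<in> B"; cases "z \<in> B") (simp_all add: ennreal_mult mult_ac)
    finally show ?thesis .
  qed
  then have "(\<integral>\<^sup>+z. ennreal ((\<eta> x * f x - \<eta> z * f z)\<^sup>2 / norm (x - z) powr b) \<partial>lborel)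
      \<le> integral\<^sup>N lborel T1 + integral\<^sup>N lborel T2 + integral\<^sup>N lborel T3 + integral\<^sup>N lborel T4"
    by (subst nn_integral_add[symmetric], simp_all)+ (rule nn_integral_mono)
  also have "\<dots> \<le> ennreal (2 * M\<^sup>2) * ((\<integral>\<^sup>+z\<in>B. ennreal (qf z) \<partial>lborel) * indicator B x)
      + ennreal (2 * E) * fB x + ennreal (M\<^sup>2 * (1 - c) powr (-b)) * ennreal (far_kernel b R (x0 - x))
        * (\<integral>\<^sup>+z. fB z \<partial>lborel) + ennreal G * fB x"
  proof (intro add_mono)
    show "integral\<^sup>N lborel T1 \<le> ennreal (2 * M\<^sup>2) * ((\<integral>\<^sup>+z\<in>B. ennreal (qf z) \<partial>lborel) * indicator B x)"
      unfolding T1_def by (subst nn_integral_cmult) (simp_all add: qf_def mult_ac)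
    have "integral\<^sup>N lborel T2 \<le> ennreal 2 * fB x * ennreal E"
      unfolding T2_def E_def n_def q\<eta>_def
      by (subst nn_integral_cmult, measurable)
         (intro mult_left_mono nn_integral_lipschitz_quotient_le R M L, use b in \<open>simp_all add: n_def\<close>)
    then show "integral\<^sup>N lborel T2 \<le> ennreal (2 * E) * fB x"
      using E by (simp add: ennreal_mult mult_ac)
    show "integral\<^sup>N lborel T3 \<le> ennreal (M\<^sup>2 * (1 - c) powr (-b)) * ennreal (far_kernel b R (x0 - x))
        * (\<integral>\<^sup>+z. fB z \<partial>lborel)"
      unfolding T3_def by (subst nn_integral_cmult) simp_all
    have "(\<integral>\<^sup>+z. ennreal (far_kernel b \<delta> (x - z)) \<partial>lborel) \<le> ennreal (far_kernel_const n b * \<delta> powr (n - b))"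
      unfolding n_def using c R b by (intro nn_integral_norm_powr_far) (simp_all add: \<delta>_def n_def)
    then have "integral\<^sup>N lborel T4 \<le> ennreal (M\<^sup>2) * fB x * ennreal (far_kernel_const n b * \<delta> powr (n - b))"
      unfolding T4_def by (subst nn_integral_cmult, measurable) (intro mult_left_mono, simp_all)
    then show "integral\<^sup>N lborel T4 \<le> ennreal G * fB x"
      using b far_kernel_const_nonneg[of n b] by (simp add: G_def \<delta>_def ennreal_mult mult_ac)
  qed
  also have "\<dots> = ennreal (2 * M\<^sup>2) * ((\<integral>\<^sup>+z\<in>B. ennreal (qf z) \<partial>lborel) * indicator B x)
      + ennreal (2 * E + G) * fB x + ennreal (M\<^sup>2 * (1 - c) powr (-b)) * ennreal (far_kernel b R (x0 - x))
        * (\<integral>\<^sup>+z. fB z \<partial>lborel)"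
  proof -
    have "ennreal (2 * E + G) * fB x = ennreal (2 * E) * fB x + ennreal G * fB x"
      using E G by (simp add: distrib_right)
    then show ?thesis by (simp only: add.assoc add.commute add.left_commute)
  qed
  finally show ?thesis by (simp only: qf_def fB_def)
qed

lemma nn_integral_cutoff_product_quotient_le:
  fixes \<eta> f :: "'a::euclidean_space \<Rightarrow> real"
  defines "n \<equiv> DIM('a)"
  assumes R: "0 < R" and c: "0 < c" "c < 1" and b: "2 < b" "n < b" "b < n + 2"
    and [measurable]: "f \<in> borel_measurable borel" "\<eta> \<in> borel_measurable borel"
    and M: "\<And>y. \<bar>\<eta> y\<bar> \<le> M" and L: "0 \<le> L" "\<And>x y. \<bar>\<eta> x - \<eta> y\<bar> \<le> L * norm (x - y)"
    and vanish: "\<And>y. y \<notin> ball x0 (c * R) \<Longrightarrow> \<eta> y = 0"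
  defines "B \<equiv> ball x0 R"
    and "E \<equiv> L\<^sup>2 * near_kernel_const n (b - 2) * R powr (real n + 2 - b)
      + 4 * M\<^sup>2 * far_kernel_const n b * R powr (n - b)"
    and "F \<equiv> M\<^sup>2 * far_kernel_const n b * ((1 - c) powr (-b) * R powr (n - b) + ((1 - c) * R) powr (n - b))"
  shows "(\<integral>\<^sup>+x. \<integral>\<^sup>+z. ennreal ((\<eta> x * f x - \<eta> z * f z)\<^sup>2 / norm (x - z) powr b) \<partial>lborel \<partial>lborel)
    \<le> ennreal (2 * M\<^sup>2) * (\<integral>\<^sup>+x\<in>B. \<integral>\<^sup>+z\<in>B. ennreal ((f x - f z)\<^sup>2 / norm (x - z) powr b) \<partial>lborel \<partial>lborel)
      + ennreal (2 * E + F) * (\<integral>\<^sup>+x\<in>B. ennreal ((f x)\<^sup>2) \<partial>lborel)"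
proof -
  have [measurable]: "B \<in> sets borel" by (simp add: B_def)
  define Kf where "Kf = far_kernel_const n b"
  define G where "G = M\<^sup>2 * Kf * ((1 - c) * R) powr (n - b)"
  define P where "P = (\<integral>\<^sup>+x\<in>B. ennreal ((f x)\<^sup>2) \<partial>lborel)"
  define Q where "Q x = (\<integral>\<^sup>+z\<in>B. ennreal ((f x - f z)\<^sup>2 / norm (x - z) powr b) \<partial>lborel)" for x
  have [measurable]: "Q \<in> borel_measurable borel" unfolding Q_def by measurable
  have Kf: "0 \<le> Kf" using b by (simp add: Kf_def far_kernel_const_nonneg)
  have EG: "0 \<le> 2 * E + G" using b L Kf unfolding E_def G_def Kf_def
    by (intro add_nonneg_nonneg mult_nonneg_nonneg near_kernel_const_nonneg far_kernel_const_nonneg) simp_all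
  have "(\<integral>\<^sup>+x. \<integral>\<^sup>+z. ennreal ((\<eta> x * f x - \<eta> z * f z)\<^sup>2 / norm (x - z) powr b) \<partial>lborel \<partial>lborel)
      \<le> (\<integral>\<^sup>+x. ennreal (2 * M\<^sup>2) * (Q x * indicator B x) + ennreal (2 * E + G) * (ennreal ((f x)\<^sup>2) * indicator B x)
        + ennreal (M\<^sup>2 * (1 - c) powr (-b)) * ennreal (far_kernel b R (x0 - x)) * P \<partial>lborel)"
    unfolding Q_def P_def B_def E_def G_def Kf_def n_def
    by (intro nn_integral_mono nn_integral_cutoff_product_quotient_slice_le R c M L vanish)
       (use b in \<open>simp_all add: n_def\<close>)
  also have "\<dots> = ennreal (2 * M\<^sup>2) * (\<integral>\<^sup>+x\<in>B. Q x \<partial>lborel) + ennreal (2 * E + G) * P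
      + ennreal (M\<^sup>2 * (1 - c) powr (-b)) * (\<integral>\<^sup>+x. ennreal (far_kernel b R (x0 - x)) \<partial>lborel) * P"
    unfolding P_def by (simp add: nn_integral_add nn_integral_cmult nn_integral_multc)
  also have "\<dots> \<le> ennreal (2 * M\<^sup>2) * (\<integral>\<^sup>+x\<in>B. Q x \<partial>lborel) + ennreal (2 * E + G) * P
      + ennreal (M\<^sup>2 * (1 - c) powr (-b)) * ennreal (Kf * R powr (n - b)) * P"
    unfolding Kf_def n_def using R b
    by (intro add_mono mult_right_mono mult_left_mono order_refl nn_integral_norm_powr_far) (simp_all add: n_def)
  also have "\<dots> = ennreal (2 * M\<^sup>2) * (\<integral>\<^sup>+x\<in>B. Q x \<partial>lborel) + ennreal (2 * E + F) * P"
  proof -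
    have "2 * E + F = (2 * E + G) + M\<^sup>2 * (1 - c) powr (-b) * (Kf * R powr (n - b))"
      by (simp add: F_def G_def Kf_def algebra_simps)
    moreover have "0 \<le> M\<^sup>2 * (1 - c) powr (-b) * (Kf * R powr (n - b))" using Kf by simp
    ultimately have "ennreal (2 * E + F)
        = ennreal (2 * E + G) + ennreal (M\<^sup>2 * (1 - c) powr (-b) * (Kf * R powr (n - b)))"
      using EG by (simp only: ennreal_plus)
    also have "\<dots> = ennreal (2 * E + G) + ennreal (M\<^sup>2 * (1 - c) powr (-b)) * ennreal (Kf * R powr (n - b))"
      using Kf by (subst ennreal_mult) simp_all
    finally show ?thesis by (simp add: distrib_right add.assoc)
  qed
  finally show ?thesis unfolding Q_def P_def .
qed

lemma Hs_semi_sq_mono: "A \<subseteq> B \<Longrightarrow> Hs_semi_sq v A t \<le> Hs_semi_sq v B t"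
  unfolding Hs_semi_sq_def
  by (intro nn_integral_mono mult_mono) (auto simp: indicator_def)

lemma cutoff_coefficients_le:
  fixes Kn Kf M L u v q :: real
  assumes "0 \<le> Kn" "0 \<le> Kf" "0 \<le> M" "0 \<le> L" "0 \<le> u" "0 \<le> v" "0 \<le> q"
  shows "M\<^sup>2 + 2 * (L\<^sup>2 * Kn * u\<^sup>2 + 4 * M\<^sup>2 * Kf * v\<^sup>2) + M\<^sup>2 * Kf * v\<^sup>2 * q
    \<le> (2 + 2 * Kn + Kf * (8 + q)) * (u * L + (v + 1) * M)\<^sup>2"
proof -
  let ?K = "2 + 2 * Kn + Kf * (8 + q)"
  have K: "1 \<le> ?K" "2 * Kn \<le> ?K" "Kf * (8 + q) \<le> ?K" using assms by simp_all
  have "M\<^sup>2 + 2 * (L\<^sup>2 * Kn * u\<^sup>2 + 4 * M\<^sup>2 * Kf * v\<^sup>2) + M\<^sup>2 * Kf * v\<^sup>2 * q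
      = 1 * M\<^sup>2 + (2 * Kn) * (u * L)\<^sup>2 + (Kf * (8 + q)) * (v * M)\<^sup>2"
    by (simp add: power_mult_distrib algebra_simps)
  also have "\<dots> \<le> ?K * M\<^sup>2 + ?K * (u * L)\<^sup>2 + ?K * (v * M)\<^sup>2"
    using K by (intro add_mono mult_right_mono) simp_all
  also have "\<dots> \<le> ?K * (u * L + (v + 1) * M)\<^sup>2"
  proof -
    have "M\<^sup>2 + (u * L)\<^sup>2 + (v * M)\<^sup>2 \<le> (u * L + (v + 1) * M)\<^sup>2"
      using assms by (simp add: power2_eq_square algebra_simps)
    then show ?thesis using K(1) by (simp add: distrib_left[symmetric])
  qed
  finally show ?thesis .
qed

(* With b = 3 + 2 (1 - s) = 5 - 2 s the kernel exponent of the H^{1-s} seminorm, this is the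
   constant K of cutoff_coefficients_le for Kn = near_kernel_const 3 (b - 2), Kf = far_kernel_const 3 b
   and q = (1 - c)^(-b) + (1 - c)^(3 - b). *)
definition cutoff_const :: "real \<Rightarrow> real \<Rightarrow> real" where
  "cutoff_const c s = 2 + 2 * near_kernel_const 3 (3 - 2 * s)
     + far_kernel_const 3 (5 - 2 * s) * (8 + (1 - c) powr (2 * s - 5) + (1 - c) powr (2 * s - 2))"

lemma Hs_semi_sq_mult_cutoff_le:
  fixes \<eta> f :: "R3 \<Rightarrow> real"
  assumes R: "0 < R" and c: "0 < c" "c < 1" and s: "0 < s" "s < 1"
    and [measurable]: "f \<in> borel_measurable borel" "\<eta> \<in> borel_measurable borel"
    and M: "\<And>y. \<bar>\<eta> y\<bar> \<le> M" and L: "0 \<le> L" "\<And>x y. \<bar>\<eta> x - \<eta> y\<bar> \<le> L * norm (x - y)"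
    and vanish: "\<And>y. y \<notin> ball x0 (c * R) \<Longrightarrow> \<eta> y = 0"
  defines "Kn \<equiv> near_kernel_const 3 (3 - 2 * s)" and "Kf \<equiv> far_kernel_const 3 (5 - 2 * s)"
    and "q \<equiv> (1 - c) powr (2 * s - 5) + (1 - c) powr (2 * s - 2)"
  shows "Hs_semi_sq (\<lambda>x. \<eta> x * f x) \<Omega> (1 - s)
    \<le> ennreal (2 * M\<^sup>2) * Hs_semi_sq f (ball x0 R) (1 - s)
      + ennreal (2 * (L\<^sup>2 * Kn * (R powr s)\<^sup>2 + 4 * M\<^sup>2 * Kf * (R powr (s - 1))\<^sup>2)
          + M\<^sup>2 * Kf * (R powr (s - 1))\<^sup>2 * q) * L2_sq f (ball x0 R)"
proof -
  have b: "3 + 2 * (1 - s) = 5 - 2 * s" by simp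
  have "Hs_semi_sq (\<lambda>x. \<eta> x * f x) \<Omega> (1 - s) \<le> Hs_semi_sq (\<lambda>x. \<eta> x * f x) UNIV (1 - s)"
    by (rule Hs_semi_sq_mono) simp
  also have "\<dots> = (\<integral>\<^sup>+x. \<integral>\<^sup>+z.
      ennreal ((\<eta> x * f x - \<eta> z * f z)\<^sup>2 / norm (x - z) powr (5 - 2 * s)) \<partial>lborel \<partial>lborel)"
    unfolding Hs_semi_sq_def b by simp
  also have "\<dots> \<le> ennreal (2 * M\<^sup>2) * Hs_semi_sq f (ball x0 R) (1 - s)
      + ennreal (2 * (L\<^sup>2 * near_kernel_const 3 (5 - 2 * s - 2) * R powr (real 3 + 2 - (5 - 2 * s))
          + 4 * M\<^sup>2 * Kf * R powr (real 3 - (5 - 2 * s)))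
        + M\<^sup>2 * Kf * ((1 - c) powr (- (5 - 2 * s)) * R powr (real 3 - (5 - 2 * s))
          + ((1 - c) * R) powr (real 3 - (5 - 2 * s)))) * L2_sq f (ball x0 R)"
    using nn_integral_cutoff_product_quotient_le[OF R c _ _ _ _ _ M L vanish, of "5 - 2 * s" f] s
    unfolding Hs_semi_sq_def L2_sq_def b Kf_def by simp
  also have "\<dots> = ennreal (2 * M\<^sup>2) * Hs_semi_sq f (ball x0 R) (1 - s)
      + ennreal (2 * (L\<^sup>2 * Kn * (R powr s)\<^sup>2 + 4 * M\<^sup>2 * Kf * (R powr (s - 1))\<^sup>2)
          + M\<^sup>2 * Kf * (R powr (s - 1))\<^sup>2 * q) * L2_sq f (ball x0 R)"
  proof -
    have "(R powr s)\<^sup>2 = R powr (real 3 + 2 - (5 - 2 * s))"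
      "(R powr (s - 1))\<^sup>2 = R powr (real 3 - (5 - 2 * s))"
      using R by (simp_all add: powr_power algebra_simps)
    moreover have "((1 - c) * R) powr (real 3 - (5 - 2 * s))
        = (1 - c) powr (2 * s - 2) * R powr (real 3 - (5 - 2 * s))"
      using c R by (simp add: powr_mult)
    ultimately show ?thesis by (simp add: Kn_def q_def algebra_simps)
  qed
  finally show ?thesis .
qed

lemma cutoff_const_ge_2: "0 < s \<Longrightarrow> s < 1 \<Longrightarrow> 2 \<le> cutoff_const c s"
  unfolding cutoff_const_def
  by (intro add_increasing2 mult_nonneg_nonneg add_nonneg_nonneg near_kernel_const_nonneg
      far_kernel_const_nonneg) simp_all

lemma L2_sq_add_Hs_semi_sq_mult_cutoff_le:
  fixes \<eta> f :: "R3 \<Rightarrow> real"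
  assumes R: "0 < R" and c: "0 < c" "c < 1" and s: "0 < s" "s < 1"
    and [measurable]: "f \<in> borel_measurable borel" "\<eta> \<in> borel_measurable borel"
    and M: "0 \<le> M" "\<And>y. \<bar>\<eta> y\<bar> \<le> M" and L: "0 \<le> L" "\<And>x y. \<bar>\<eta> x - \<eta> y\<bar> \<le> L * norm (x - y)"
    and vanish: "\<And>y. y \<notin> ball x0 (c * R) \<Longrightarrow> \<eta> y = 0"
  defines "A \<equiv> R powr s * L + (R powr (s - 1) + 1) * M" and "K \<equiv> cutoff_const c s"
    and "P \<equiv> L2_sq f (ball x0 R)" and "S \<equiv> Hs_semi_sq f (ball x0 R) (1 - s)"
  shows "L2_sq (\<lambda>x. \<eta> x * f x) \<Omega> + Hs_semi_sq (\<lambda>x. \<eta> x * f x) \<Omega> (1 - s)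
    \<le> ennreal K * (ennreal (A\<^sup>2) * P + ennreal (M\<^sup>2) * S)"
proof -
  define Kn where "Kn = near_kernel_const 3 (3 - 2 * s)"
  define Kf where "Kf = far_kernel_const 3 (5 - 2 * s)"
  define q where "q = (1 - c) powr (2 * s - 5) + (1 - c) powr (2 * s - 2)"
  define C where "C = 2 * (L\<^sup>2 * Kn * (R powr s)\<^sup>2 + 4 * M\<^sup>2 * Kf * (R powr (s - 1))\<^sup>2)
    + M\<^sup>2 * Kf * (R powr (s - 1))\<^sup>2 * q"
  have Kn: "0 \<le> Kn" and Kf: "0 \<le> Kf"
    using s by (simp_all add: Kn_def Kf_def near_kernel_const_nonneg far_kernel_const_nonneg)
  have C: "0 \<le> C" using Kn Kf by (simp add: C_def q_def)
  have "\<eta> y = 0" if "y \<notin> ball x0 R" for y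
    using that mult_strict_right_mono[OF c(2) R] by (intro vanish) auto
  then have "L2_sq (\<lambda>x. \<eta> x * f x) \<Omega> \<le> ennreal (M\<^sup>2) * P"
    unfolding P_def by (intro L2_sq_mult_le M(2)) simp_all
  moreover have "Hs_semi_sq (\<lambda>x. \<eta> x * f x) \<Omega> (1 - s) \<le> ennreal (2 * M\<^sup>2) * S + ennreal C * P"
    unfolding S_def P_def C_def Kn_def Kf_def q_def
    by (rule Hs_semi_sq_mult_cutoff_le[OF R c s _ _ M(2) L vanish]) simp_all
  ultimately have "L2_sq (\<lambda>x. \<eta> x * f x) \<Omega> + Hs_semi_sq (\<lambda>x. \<eta> x * f x) \<Omega> (1 - s)
      \<le> ennreal (M\<^sup>2) * P + (ennreal (2 * M\<^sup>2) * S + ennreal C * P)"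
    by (rule add_mono)
  also have "\<dots> = ennreal (M\<^sup>2 + C) * P + ennreal (2 * M\<^sup>2) * S"
    using C by (simp add: distrib_right add_ac)
  also have "\<dots> \<le> ennreal (K * A\<^sup>2) * P + ennreal (K * M\<^sup>2) * S"
  proof (intro add_mono mult_right_mono ennreal_leI)
    show "M\<^sup>2 + C \<le> K * A\<^sup>2"
      using cutoff_coefficients_le[OF Kn Kf M(1) L(1), of "R powr s" "R powr (s - 1)" q]
      by (simp add: K_def cutoff_const_def A_def C_def Kn_def Kf_def q_def add.assoc)
    show "2 \<le> K" unfolding K_def by (rule cutoff_const_ge_2[OF s])
  qed simp_all
  also have "\<dots> = ennreal K * (ennreal (A\<^sup>2) * P + ennreal (M\<^sup>2) * S)"
    using cutoff_const_ge_2[OF s, of c] by (simp add: K_def ennreal_mult distrib_left mult.assoc)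
  finally show ?thesis .
qed

lemma Hs_norm_mult_cutoff_le:
  fixes \<eta> f :: "R3 \<Rightarrow> real"
  assumes R: "0 < R" and c: "0 < c" "c < 1" and s: "0 < s" "s < 1"
    and f: "f \<in> borel_measurable borel" and \<eta>: "\<eta> \<in> borel_measurable borel"
    and M: "0 \<le> M" "\<And>y. \<bar>\<eta> y\<bar> \<le> M" and L: "0 \<le> L" "\<And>x y. \<bar>\<eta> x - \<eta> y\<bar> \<le> L * norm (x - y)"
    and vanish: "\<And>y. y \<notin> ball x0 (c * R) \<Longrightarrow> \<eta> y = 0"
  defines "A \<equiv> R powr s * L + (R powr (s - 1) + 1) * M"
  shows "Hs_norm (\<lambda>x. \<eta> x * f x) \<Omega> (1 - s) \<le> ennreal (sqrt (cutoff_const c s))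
    * (ennreal A * L2_norm f (ball x0 R) + ennreal M * Hs_semi f (ball x0 R) (1 - s))"
proof -
  define P where "P = L2_sq f (ball x0 R)"
  define S where "S = Hs_semi_sq f (ball x0 R) (1 - s)"
  have A: "0 \<le> A" using M(1) L(1) by (simp add: A_def)
  have "Hs_norm (\<lambda>x. \<eta> x * f x) \<Omega> (1 - s)
      \<le> ennsqrt (ennreal (cutoff_const c s) * (ennreal (A\<^sup>2) * P + ennreal (M\<^sup>2) * S))"
    unfolding Hs_norm_def A_def P_def S_def
    by (intro ennsqrt_mono L2_sq_add_Hs_semi_sq_mult_cutoff_le R c s f \<eta> M L vanish)
  also have "\<dots> = ennreal (sqrt (cutoff_const c s)) * ennsqrt (ennreal (A\<^sup>2) * P + ennreal (M\<^sup>2) * S)"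
    using cutoff_const_ge_2[OF s, of c] by (simp add: ennsqrt_mult ennsqrt_ennreal)
  also have "\<dots> \<le> ennreal (sqrt (cutoff_const c s)) * (ennsqrt (ennreal (A\<^sup>2) * P) + ennsqrt (ennreal (M\<^sup>2) * S))"
    by (intro mult_left_mono ennsqrt_add_le) simp
  also have "\<dots> = ennreal (sqrt (cutoff_const c s)) * (ennreal A * ennsqrt P + ennreal M * ennsqrt S)"
    using A M(1) by (simp add: ennsqrt_mult ennreal_power[symmetric] del: ennreal_power)
  finally show ?thesis by (simp add: P_def S_def L2_norm_def Hs_semi_def)
qed

theorem lemmaA1:
  fixes \<Omega> :: "R3 set" and s :: real
  assumes "lipschitz_domain \<Omega>" and "0 < s" and "s < 1"
  shows "\<exists>C_loc>0. \<forall>c. 0 < c \<and> c < 1 \<longrightarrow> (\<exists>C_loc2>0.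
     \<forall>(x0::R3) (R::real) (\<eta>::R3 \<Rightarrow> real) (f::R3 \<Rightarrow> real).
       0 < R \<and> ball x0 R \<subseteq> \<Omega> \<and> \<eta> \<in> C0_inf (ball x0 (c * R)) \<and> f \<in> borel_measurable lborel \<longrightarrow>
       Hneg_norm (\<lambda>x. \<eta> x * f x) \<Omega> s
         \<le> ennreal C_loc * sup_norm \<eta> (ball x0 (c * R)) * L2_norm f (ball x0 (c * R)) \<and>
       Hs_norm (\<lambda>x. \<eta> x * f x) \<Omega> (1 - s)
         \<le> ennreal C_loc2 *
            ((ennreal (R powr s) * grad_sup_norm \<eta> (ball x0 (c * R))
               + ennreal (R powr (s - 1) + 1) * sup_norm \<eta> (ball x0 (c * R))) * L2_norm f (ball x0 R)
             + sup_norm \<eta> (ball x0 (c * R)) * Hs_semi f (ball x0 R) (1 - s)))"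
proof (rule exI[of _ 1], intro conjI allI impI, goal_cases)
  case (2 c)
  have \<Omega>: "\<Omega> \<in> sets borel" using assms(1) by (simp add: lipschitz_domain_def)
  show ?case
  proof (intro exI[of _ "sqrt (cutoff_const c s)"] conjI allI impI, goal_cases)
    case (2 x0 R \<eta> f)
    then have \<eta>: "\<eta> \<in> C0_inf (ball x0 (c * R))" and f: "f \<in> borel_measurable borel" by auto
    obtain M where M: "0 \<le> M" "sup_norm \<eta> (ball x0 (c * R)) = ennreal M" "\<And>x. \<bar>\<eta> x\<bar> \<le> M"
      using C0_inf_sup_norm[OF \<eta>] by blast
    have "Hneg_norm (\<lambda>x. \<eta> x * f x) \<Omega> s \<le> ennreal M * L2_norm f (ball x0 (c * R))"
      by (intro Hneg_norm_mult_le \<Omega> f C0_inf_borel_measurable[OF \<eta>] M(3) C0_inf_vanishes[OF \<eta>]) simp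
    then show ?case using M(2) by simp
  next
    case (3 x0 R \<eta> f)
    then have \<eta>: "\<eta> \<in> C0_inf (ball x0 (c * R))" and f: "f \<in> borel_measurable borel" by auto
    obtain M where M: "0 \<le> M" "sup_norm \<eta> (ball x0 (c * R)) = ennreal M" "\<And>x. \<bar>\<eta> x\<bar> \<le> M"
      using C0_inf_sup_norm[OF \<eta>] by blast
    obtain L where L: "0 \<le> L" "grad_sup_norm \<eta> (ball x0 (c * R)) = ennreal L"
      "\<And>x y. \<bar>\<eta> x - \<eta> y\<bar> \<le> L * norm (x - y)"
      using C0_inf_lipschitz[OF \<eta>] by blast
    have "Hs_norm (\<lambda>x. \<eta> x * f x) \<Omega> (1 - s) \<le> ennreal (sqrt (cutoff_const c s))
        * (ennreal (R powr s * L + (R powr (s - 1) + 1) * M) * L2_norm f (ball x0 R)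
          + ennreal M * Hs_semi f (ball x0 R) (1 - s))"
      using 2 3 assms(2,3) M(1,3) L(1,3) C0_inf_vanishes[OF \<eta>]
      by (intro Hs_norm_mult_cutoff_le f C0_inf_borel_measurable[OF \<eta>]) auto
    then show ?case using M(1,2) L(1,2) by (simp add: ennreal_mult ennreal_plus)
  qed (use cutoff_const_ge_2[OF assms(2,3), of c] in simp)
qed simp

end
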